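(* Let $X$ be a metric directed multigraph whose strongly connected components all have different total lengths, and let $(X_n,n\in\mathbb{N})$ be metric directed multigraphs with $d_{\vec{\mathcal G}}(X_n,X)\to0$. Then the strongly connected components of $X_n$, listed in decreasing order of total length and viewed as metric directed multigraphs, converge (componentwise, for $d_{\vec{\mathcal G}}$) to those of $X$, listed in decreasing order of total length.
   Context: A metric directed multigraph (MDM) is $(V,E,r,\ell)$ with $V,E$ finite sets, $r=(r_1,r_2):E\to V\times V$ (tail, head), and $\ell:E\to(0,\infty)$; its total length is $\sum_e\ell(e)$. Strongly connected components are maximal sub-multigraphs in which any vertex can reach any other by a directed path; they are viewed as MDMs with the inherited edge lengths. $d_{\vec{\mathcal G}}(X,X')=\inf\sup_{e\in E}|\ell(e)-\ell'(g(e))|$, infimum over graph isomorphisms $(f,g)$ (bijections $f:V\to V'$, $g:E\to E'$ with $r'(g(e))=(f(r_1(e)),f(r_2(e)))$), and $+\infty$ if none exists. *)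

theory Defs
  imports "HOL-Analysis.Analysis"
begin

record ('v, 'e) mdm =
  verts :: "'v set"
  arcs  :: "'e set"
  tail  :: "'e \<Rightarrow> 'v"
  head  :: "'e \<Rightarrow> 'v"
  len   :: "'e \<Rightarrow> real"

definition is_mdm :: "('v, 'e) mdm \<Rightarrow> bool" where
  "is_mdm X \<longleftrightarrow> finite (verts X) \<and> finite (arcs X) \<and>
     (\<forall>e\<in>arcs X. tail X e \<in> verts X \<and> head X e \<in> verts X \<and> len X e > 0)"

definition total_length :: "('v, 'e) mdm \<Rightarrow> real" where
  "total_length X = (\<Sum>e\<in>arcs X. len X e)"

definition mdm_isos :: "('v, 'e) mdm \<Rightarrow> ('w, 'f) mdm \<Rightarrow> (('v \<Rightarrow> 'w) \<times> ('e \<Rightarrow> 'f)) set" where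
  "mdm_isos X Y = {(f, g). bij_betw f (verts X) (verts Y) \<and> bij_betw g (arcs X) (arcs Y) \<and>
      (\<forall>e\<in>arcs X. tail Y (g e) = f (tail X e) \<and> head Y (g e) = f (head X e))}"

text \<open>The distance d: inf over isomorphisms of sup over edges of the length discrepancy,
  +infinity if no isomorphism exists (the sup over an empty edge set is 0).\<close>
definition mdm_dist :: "('v, 'e) mdm \<Rightarrow> ('w, 'f) mdm \<Rightarrow> ereal" where
  "mdm_dist X Y = (if mdm_isos X Y = {} then \<infinity> else
     (INF fg\<in>mdm_isos X Y.
        Sup (insert 0 ((\<lambda>e. ereal \<bar>len X e - len Y (snd fg e)\<bar>) ` arcs X))))"

definition is_sub :: "('v, 'e) mdm \<Rightarrow> 'v set \<Rightarrow> 'e set \<Rightarrow> bool" where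
  "is_sub X V' E' \<longleftrightarrow> V' \<subseteq> verts X \<and> E' \<subseteq> arcs X \<and>
     (\<forall>e\<in>E'. tail X e \<in> V' \<and> head X e \<in> V')"

definition reaches :: "('v, 'e) mdm \<Rightarrow> 'e set \<Rightarrow> 'v \<Rightarrow> 'v \<Rightarrow> bool" where
  "reaches X E' u v \<longleftrightarrow> (u, v) \<in> {(tail X e, head X e) | e. e \<in> E'}\<^sup>*"

definition strongly_connected_sub :: "('v, 'e) mdm \<Rightarrow> 'v set \<Rightarrow> 'e set \<Rightarrow> bool" where
  "strongly_connected_sub X V' E' \<longleftrightarrow> is_sub X V' E' \<and> V' \<noteq> {} \<and>
     (\<forall>u\<in>V'. \<forall>v\<in>V'. reaches X E' u v)"

definition is_scc :: "('v, 'e) mdm \<Rightarrow> 'v set \<Rightarrow> 'e set \<Rightarrow> bool" where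
  "is_scc X V' E' \<longleftrightarrow> strongly_connected_sub X V' E' \<and>
     (\<forall>V'' E''. strongly_connected_sub X V'' E'' \<and> V' \<subseteq> V'' \<and> E' \<subseteq> E''
                 \<longrightarrow> V'' = V' \<and> E'' = E')"

definition sccs :: "('v, 'e) mdm \<Rightarrow> ('v, 'e) mdm set" where
  "sccs X = {X\<lparr>verts := V', arcs := E'\<rparr> | V' E'. is_scc X V' E'}"

definition sorted_sccs :: "('v, 'e) mdm \<Rightarrow> ('v, 'e) mdm list \<Rightarrow> bool" where
  "sorted_sccs X L \<longleftrightarrow> distinct L \<and> set L = sccs X \<and>
     sorted_wrt (\<lambda>A B. total_length A \<ge> total_length B) L"

end

theory Submission
  imports Defs
begin

text \<open>An isomorphism from \<open>X\<^sub>n\<close> to \<open>X\<close> whose edge lengths differ by at most \<open>\<epsilon>\<close> maps the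
  strongly connected components of \<open>X\<^sub>n\<close> bijectively onto those of \<open>X\<close>; corresponding
  components are at distance at most \<open>\<epsilon>\<close>, and their total lengths differ by at most
  \<open>|E| \<epsilon>\<close>. Once \<open>|E| \<epsilon>\<close> is below half the smallest gap between the total lengths of
  distinct components of \<open>X\<close>, the image of the decreasing enumeration of the components
  of \<open>X\<^sub>n\<close> is still decreasing, hence it is the unique decreasing enumeration of the
  components of \<open>X\<close>.\<close>

lemma mdm_isosD:
  assumes "(f, g) \<in> mdm_isos A B"
  shows "bij_betw f (verts A) (verts B)" "bij_betw g (arcs A) (arcs B)"
    and "e \<in> arcs A \<Longrightarrow> tail B (g e) = f (tail A e)"
    and "e \<in> arcs A \<Longrightarrow> head B (g e) = f (head A e)"
  using assms by (auto simp: mdm_isos_def)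

lemma mdm_isos_inv:
  assumes "is_mdm A" and iso: "(f, g) \<in> mdm_isos A B"
  shows "(inv_into (verts A) f, inv_into (arcs A) g) \<in> mdm_isos B A"
proof -
  note bf = mdm_isosD(1)[OF iso] and bg = mdm_isosD(2)[OF iso]
  have "tail A e' = inv_into (verts A) f (tail B e) \<and> head A e' = inv_into (verts A) f (head B e)"
    if "e \<in> arcs B" and e': "e' = inv_into (arcs A) g e" for e e'
  proof -
    have "e' \<in> arcs A" "g e' = e"
      using bg that by (auto simp: bij_betw_inv_into_right inv_into_into bij_betw_imp_surj_on)
    moreover from this have "tail A e' \<in> verts A" "head A e' \<in> verts A"
      using assms(1) by (auto simp: is_mdm_def)
    ultimately show ?thesis
      using mdm_isosD(3,4)[OF iso] bf by (metis bij_betw_inv_into_left)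
  qed
  then show ?thesis
    using bf bg by (auto simp: mdm_isos_def bij_betw_inv_into)
qed

lemma reaches_image:
  assumes iso: "(f, g) \<in> mdm_isos A B" and "E \<subseteq> arcs A" "reaches A E u v"
  shows "reaches B (g ` E) (f u) (f v)"
proof -
  have "(u, v) \<in> {(tail A e, head A e) | e. e \<in> E}\<^sup>*"
    using assms(3) by (simp add: reaches_def)
  then have "(f u, f v) \<in> {(tail B e, head B e) | e. e \<in> g ` E}\<^sup>*"
  proof (induction rule: rtrancl_induct)
    case base
    show ?case by simp
  next
    case (step y z)
    then obtain e where "e \<in> E" "y = tail A e" "z = head A e"
      by auto
    then have "(f y, f z) \<in> {(tail B e, head B e) | e. e \<in> g ` E}"
      using mdm_isosD(3,4)[OF iso] assms(2) by force
    with step.IH show ?case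
      by (rule rtrancl_into_rtrancl)
  qed
  then show ?thesis
    by (simp add: reaches_def)
qed

lemma strongly_connected_sub_image:
  assumes iso: "(f, g) \<in> mdm_isos A B" and sc: "strongly_connected_sub A V E"
  shows "strongly_connected_sub B (f ` V) (g ` E)"
proof -
  have sub: "V \<subseteq> verts A" "E \<subseteq> arcs A" "\<forall>e\<in>E. tail A e \<in> V \<and> head A e \<in> V"
    using sc by (auto simp: strongly_connected_sub_def is_sub_def)
  then have "is_sub B (f ` V) (g ` E)"
    using mdm_isosD[OF iso] by (force simp: is_sub_def bij_betw_def)
  moreover have "\<forall>u\<in>f ` V. \<forall>v\<in>f ` V. reaches B (g ` E) u v"
    using reaches_image[OF iso sub(2)] sc by (auto simp: strongly_connected_sub_def)
  ultimately show ?thesis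
    using sc by (simp add: strongly_connected_sub_def)
qed

lemma is_scc_image:
  assumes "is_mdm A" and iso: "(f, g) \<in> mdm_isos A B" and scc: "is_scc A V E"
  shows "is_scc B (f ` V) (g ` E)"
  unfolding is_scc_def
proof (intro conjI allI impI)
  have sc: "strongly_connected_sub A V E"
    using scc by (simp add: is_scc_def)
  then show "strongly_connected_sub B (f ` V) (g ` E)"
    by (rule strongly_connected_sub_image[OF iso])
  fix V' E'
  assume larger: "strongly_connected_sub B V' E' \<and> f ` V \<subseteq> V' \<and> g ` E \<subseteq> E'"
  let ?f' = "inv_into (verts A) f" and ?g' = "inv_into (arcs A) g"
  note bf = mdm_isosD(1)[OF iso] and bg = mdm_isosD(2)[OF iso]
  have "V \<subseteq> verts A" "E \<subseteq> arcs A" "V' \<subseteq> verts B" "E' \<subseteq> arcs B"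
    using sc larger by (auto simp: strongly_connected_sub_def is_sub_def)
  then have cancel: "?f' ` f ` V = V" "?g' ` g ` E = E" "f ` ?f' ` V' = V'" "g ` ?g' ` E' = E'"
    using bf bg by (auto simp: bij_betw_def image_inv_into_cancel)
  have "strongly_connected_sub A (?f' ` V') (?g' ` E')"
    using strongly_connected_sub_image[OF mdm_isos_inv[OF assms(1) iso]] larger by blast
  moreover have "V \<subseteq> ?f' ` V'" "E \<subseteq> ?g' ` E'"
    using larger cancel(1,2) by (metis image_mono)+
  ultimately have "?f' ` V' = V" "?g' ` E' = E"
    using scc by (auto simp: is_scc_def)
  then show "V' = f ` V" "E' = g ` E"
    using cancel(3,4) by auto
qed

definition mdm_image :: "('v, 'e) mdm \<Rightarrow> ('w \<Rightarrow> 'v) \<Rightarrow> ('f \<Rightarrow> 'e) \<Rightarrow> ('w, 'f) mdm \<Rightarrow> ('v, 'e) mdm"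
  where "mdm_image X f g D = X\<lparr>verts := f ` verts D, arcs := g ` arcs D\<rparr>"

lemma in_sccs_iff: "D \<in> sccs X \<longleftrightarrow> (\<exists>V E. D = X\<lparr>verts := V, arcs := E\<rparr> \<and> is_scc X V E)"
  by (auto simp: sccs_def)

lemma is_scc_is_sub: "is_scc X V E \<Longrightarrow> is_sub X V E"
  by (simp add: is_scc_def strongly_connected_sub_def)

lemma bij_betw_sccs_image:
  assumes "is_mdm Y" "is_mdm X" and iso: "(f, g) \<in> mdm_isos Y X"
  shows "bij_betw (mdm_image X f g) (sccs Y) (sccs X)"
proof (rule bij_betw_imageI)
  note bf = mdm_isosD(1)[OF iso] and bg = mdm_isosD(2)[OF iso]
  show "inj_on (mdm_image X f g) (sccs Y)"
  proof (rule inj_onI)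
    fix D1 D2
    assume "D1 \<in> sccs Y" "D2 \<in> sccs Y" and eq: "mdm_image X f g D1 = mdm_image X f g D2"
    then obtain V1 E1 V2 E2 where D: "D1 = Y\<lparr>verts := V1, arcs := E1\<rparr>" "is_sub Y V1 E1"
      "D2 = Y\<lparr>verts := V2, arcs := E2\<rparr>" "is_sub Y V2 E2"
      unfolding in_sccs_iff by (metis is_scc_is_sub)
    have "f ` V1 = f ` V2" "g ` E1 = g ` E2"
      using arg_cong[OF eq, of verts] arg_cong[OF eq, of arcs] D by (simp_all add: mdm_image_def)
    with D bf bg have "V1 = V2" "E1 = E2"
      by (auto simp: is_sub_def bij_betw_def inj_on_image_eq_iff)
    with D show "D1 = D2" by simp
  qed
  show "mdm_image X f g ` sccs Y = sccs X"
  proof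
    show "mdm_image X f g ` sccs Y \<subseteq> sccs X"
      using is_scc_image[OF assms(1) iso] by (fastforce simp: in_sccs_iff mdm_image_def)
  next
    show "sccs X \<subseteq> mdm_image X f g ` sccs Y"
    proof
      fix C
      assume "C \<in> sccs X"
      then obtain V E where C: "C = X\<lparr>verts := V, arcs := E\<rparr>" "is_scc X V E"
        by (auto simp: in_sccs_iff)
      let ?f' = "inv_into (verts Y) f" and ?g' = "inv_into (arcs Y) g"
      have "V \<subseteq> verts X" "E \<subseteq> arcs X"
        using C(2) by (auto simp: is_sub_def dest!: is_scc_is_sub)
      then have "f ` ?f' ` V = V" "g ` ?g' ` E = E"
        using bf bg by (simp_all add: bij_betw_def image_inv_into_cancel)
      then have "C = mdm_image X f g (Y\<lparr>verts := ?f' ` V, arcs := ?g' ` E\<rparr>)"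
        using C(1) by (simp add: mdm_image_def)
      moreover have "Y\<lparr>verts := ?f' ` V, arcs := ?g' ` E\<rparr> \<in> sccs Y"
        using is_scc_image[OF assms(2) mdm_isos_inv[OF assms(1) iso] C(2)] by (auto simp: sccs_def)
      ultimately show "C \<in> mdm_image X f g ` sccs Y"
        by blast
    qed
  qed
qed

lemma mdm_isos_sccs_image:
  assumes iso: "(f, g) \<in> mdm_isos Y X" and "D \<in> sccs Y"
  shows "(f, g) \<in> mdm_isos D (mdm_image X f g D)"
proof -
  obtain V E where D: "D = Y\<lparr>verts := V, arcs := E\<rparr>" "is_sub Y V E"
    using assms(2) by (auto simp: in_sccs_iff dest: is_scc_is_sub)
  then have "bij_betw f V (f ` V)" "bij_betw g E (g ` E)"
    using mdm_isosD(1,2)[OF iso] by (auto simp: is_sub_def bij_betw_def intro: inj_on_imp_bij_betw inj_on_subset)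
  with D show ?thesis
    using mdm_isosD(3,4)[OF iso] by (auto simp: mdm_isos_def mdm_image_def is_sub_def)
qed

lemma sccs_arcs_subset: "D \<in> sccs X \<Longrightarrow> arcs D \<subseteq> arcs X"
  by (auto simp: in_sccs_iff is_sub_def dest!: is_scc_is_sub)

lemma len_sccs: "D \<in> sccs X \<Longrightarrow> len D = len X"
  by (auto simp: in_sccs_iff)

lemma len_mdm_image [simp]: "len (mdm_image X f g D) = len X"
  by (simp add: mdm_image_def)

lemma mdm_dist_nonneg: "0 \<le> mdm_dist A B"
  unfolding mdm_dist_def by (auto intro!: INF_greatest Sup_upper)

lemma mdm_dist_le_iso:
  fixes \<epsilon> :: real
  assumes iso: "(f, g) \<in> mdm_isos A B"
    and close: "\<forall>e\<in>arcs A. \<bar>len A e - len B (g e)\<bar> \<le> \<epsilon>" and "0 \<le> \<epsilon>"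
  shows "mdm_dist A B \<le> ereal \<epsilon>"
proof -
  have "mdm_dist A B \<le> Sup (insert 0 ((\<lambda>e. ereal \<bar>len A e - len B (g e)\<bar>) ` arcs A))"
    unfolding mdm_dist_def using iso by (auto intro!: INF_lower2[OF iso])
  also have "\<dots> \<le> ereal \<epsilon>"
    using close \<open>0 \<le> \<epsilon>\<close> by (auto intro!: Sup_least)
  finally show ?thesis .
qed

lemma mdm_dist_lessE:
  fixes \<epsilon> :: real
  assumes "mdm_dist A B < ereal \<epsilon>"
  obtains f g where "(f, g) \<in> mdm_isos A B" "\<forall>e\<in>arcs A. \<bar>len A e - len B (g e)\<bar> < \<epsilon>"
proof -
  have "mdm_isos A B \<noteq> {}"
    using assms by (auto simp: mdm_dist_def)
  with assms obtain fg where iso: "fg \<in> mdm_isos A B"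
    and "Sup (insert 0 ((\<lambda>e. ereal \<bar>len A e - len B (snd fg e)\<bar>) ` arcs A)) < ereal \<epsilon>"
    by (auto simp: mdm_dist_def INF_less_iff)
  then have "\<forall>e\<in>arcs A. ereal \<bar>len A e - len B (snd fg e)\<bar> < ereal \<epsilon>"
    by (meson Sup_upper image_eqI insertI2 order_le_less_trans)
  then have "\<forall>e\<in>arcs A. \<bar>len A e - len B (snd fg e)\<bar> < \<epsilon>"
    by simp
  with iso that show ?thesis
    by (metis prod.collapse)
qed

lemma total_length_iso_diff:
  fixes \<epsilon> :: real
  assumes iso: "(f, g) \<in> mdm_isos A B"
    and close: "\<forall>e\<in>arcs A. \<bar>len A e - len B (g e)\<bar> \<le> \<epsilon>"
  shows "\<bar>total_length A - total_length B\<bar> \<le> card (arcs A) * \<epsilon>"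
proof -
  have "total_length B = (\<Sum>e\<in>arcs A. len B (g e))"
    unfolding total_length_def using sum.reindex_bij_betw[OF mdm_isosD(2)[OF iso], of "len B"] by simp
  then have "\<bar>total_length A - total_length B\<bar> = \<bar>\<Sum>e\<in>arcs A. len A e - len B (g e)\<bar>"
    by (simp add: total_length_def sum_subtractf)
  also have "\<dots> \<le> (\<Sum>e\<in>arcs A. \<bar>len A e - len B (g e)\<bar>)"
    by (rule sum_abs)
  also have "\<dots> \<le> (\<Sum>e\<in>arcs A. \<epsilon>)"
    using close by (intro sum_mono) auto
  finally show ?thesis
    by simp
qed

lemma sorted_wrt_map_if_close:
  fixes s :: "'a \<Rightarrow> real" and t :: "'b \<Rightarrow> real"
  assumes "sorted_wrt (\<lambda>x y. s y \<le> s x) xs"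
    and close: "\<forall>x\<in>set xs. \<bar>s x - t (h x)\<bar> \<le> \<delta>"
    and gap: "\<forall>x\<in>set xs. \<forall>y\<in>set xs. h x \<noteq> h y \<longrightarrow> 2 * \<delta> < \<bar>t (h x) - t (h y)\<bar>"
  shows "sorted_wrt (\<lambda>a b. t b \<le> t a) (map h xs)"
  unfolding sorted_wrt_map
proof (rule sorted_wrt_mono_rel[OF _ assms(1)])
  fix x y
  assume x: "x \<in> set xs" and y: "y \<in> set xs" and "s y \<le> s x"
  show "t (h y) \<le> t (h x)"
  proof (cases "h x = h y")
    case False
    with x y gap have "2 * \<delta> < \<bar>t (h x) - t (h y)\<bar>"
      by blast
    moreover have "\<bar>s x - t (h x)\<bar> \<le> \<delta>" "\<bar>s y - t (h y)\<bar> \<le> \<delta>"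
      using x y close by blast+
    ultimately show ?thesis
      using \<open>s y \<le> s x\<close> by arith
  qed simp
qed

lemma sorted_sccs_unique:
  assumes "inj_on total_length (sccs X)" "sorted_sccs X L" "sorted_sccs X L'"
  shows "L = L'"
proof (rule map_sorted_distinct_set_unique[where f = "\<lambda>A. - total_length A"])
  show "inj_on (\<lambda>A. - total_length A) (set L \<union> set L')"
    using assms by (auto simp: sorted_sccs_def inj_on_def)
  with assms show "sorted (map (\<lambda>A. - total_length A) L)" "sorted (map (\<lambda>A. - total_length A) L')"
    "distinct (map (\<lambda>A. - total_length A) L)" "distinct (map (\<lambda>A. - total_length A) L')"
    "set L = set L'"
    by (auto simp: sorted_sccs_def sorted_wrt_map distinct_map inj_on_Un)
qed

lemma sorted_sccs_map_image:
  fixes \<epsilon> :: real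
  assumes "is_mdm X" "is_mdm Y" and iso: "(f, g) \<in> mdm_isos Y X"
    and close: "\<forall>e\<in>arcs Y. \<bar>len Y e - len X (g e)\<bar> \<le> \<epsilon>" and "0 \<le> \<epsilon>"
    and gap: "\<forall>A\<in>sccs X. \<forall>B\<in>sccs X. A \<noteq> B \<longrightarrow>
                2 * (card (arcs X) * \<epsilon>) < \<bar>total_length A - total_length B\<bar>"
    and sorted_Y: "sorted_sccs Y LY"
  shows "sorted_sccs X (map (mdm_image X f g) LY)"
proof -
  let ?h = "mdm_image X f g"
  have bij: "bij_betw ?h (set LY) (sccs X)"
    using bij_betw_sccs_image[OF assms(2,1) iso] sorted_Y by (simp add: sorted_sccs_def)
  have "card (arcs Y) = card (arcs X)"
    using bij_betw_same_card[OF mdm_isosD(2)[OF iso]] .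
  have "\<bar>total_length D - total_length (?h D)\<bar> \<le> card (arcs X) * \<epsilon>" if "D \<in> set LY" for D
  proof -
    have D: "D \<in> sccs Y" "arcs D \<subseteq> arcs Y"
      using that sorted_Y sccs_arcs_subset by (auto simp: sorted_sccs_def)
    moreover from this have "\<forall>e\<in>arcs D. \<bar>len D e - len (?h D) (g e)\<bar> \<le> \<epsilon>"
      using close by (auto simp: len_sccs)
    ultimately have "\<bar>total_length D - total_length (?h D)\<bar> \<le> card (arcs D) * \<epsilon>"
      using total_length_iso_diff[OF mdm_isos_sccs_image[OF iso]] by blast
    also have "\<dots> \<le> card (arcs X) * \<epsilon>"
      using card_mono[OF _ D(2)] assms(2) \<open>0 \<le> \<epsilon>\<close> \<open>card (arcs Y) = card (arcs X)\<close>
      by (simp add: is_mdm_def mult_right_mono)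
    finally show ?thesis .
  qed
  moreover have "sorted_wrt (\<lambda>A B. total_length B \<le> total_length A) LY"
    using sorted_Y by (simp add: sorted_sccs_def)
  ultimately have "sorted_wrt (\<lambda>A B. total_length B \<le> total_length A) (map ?h LY)"
    using gap bij_betw_apply[OF bij] by (intro sorted_wrt_map_if_close) auto
  with bij sorted_Y show ?thesis
    by (simp add: sorted_sccs_def distinct_map bij_betw_def)
qed

lemma sorted_sccs_close:
  fixes \<epsilon> :: real
  assumes "is_mdm X" "is_mdm Y" and dist: "mdm_dist Y X < ereal \<epsilon>"
    and gap: "\<forall>A\<in>sccs X. \<forall>B\<in>sccs X. A \<noteq> B \<longrightarrow>
                2 * (card (arcs X) * \<epsilon>) < \<bar>total_length A - total_length B\<bar>"
    and sorted_X: "sorted_sccs X L" and sorted_Y: "sorted_sccs Y LY"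
  shows "length LY = length L" "\<forall>i < length L. mdm_dist (LY ! i) (L ! i) \<le> ereal \<epsilon>"
proof -
  obtain f g where iso: "(f, g) \<in> mdm_isos Y X"
    and "\<forall>e\<in>arcs Y. \<bar>len Y e - len X (g e)\<bar> < \<epsilon>"
    using mdm_dist_lessE[OF dist] .
  then have close: "\<forall>e\<in>arcs Y. \<bar>len Y e - len X (g e)\<bar> \<le> \<epsilon>"
    by (simp add: less_imp_le)
  have "0 \<le> \<epsilon>"
    using order_le_less_trans[OF mdm_dist_nonneg dist] by (simp add: zero_ereal_def)
  have inj: "inj_on total_length (sccs X)"
  proof (rule inj_onI, rule ccontr)
    fix A B
    assume "A \<in> sccs X" "B \<in> sccs X" "total_length A = total_length B" "A \<noteq> B"
    with gap have "2 * (card (arcs X) * \<epsilon>) < \<bar>total_length A - total_length B\<bar>"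
      by blast
    with \<open>total_length A = total_length B\<close> have "2 * (card (arcs X) * \<epsilon>) < 0"
      by simp
    with \<open>0 \<le> \<epsilon>\<close> show False
      by (simp add: mult_less_0_iff)
  qed
  have L: "L = map (mdm_image X f g) LY"
    using sorted_sccs_unique[OF inj sorted_X]
      sorted_sccs_map_image[OF assms(1,2) iso close \<open>0 \<le> \<epsilon>\<close> gap sorted_Y] .
  then show "length LY = length L"
    by simp
  have "mdm_dist (LY ! i) (L ! i) \<le> ereal \<epsilon>" if "i < length L" for i
  proof -
    have "i < length LY"
      using that L by simp
    then have D: "LY ! i \<in> sccs Y" "L ! i = mdm_image X f g (LY ! i)"
      using nth_mem[of i LY] sorted_Y L unfolding sorted_sccs_def by auto
    then have "\<forall>e\<in>arcs (LY ! i). \<bar>len (LY ! i) e - len (L ! i) (g e)\<bar> \<le> \<epsilon>"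
      using close sccs_arcs_subset[OF D(1)] by (auto simp: len_sccs[OF D(1)])
    with D show ?thesis
      using mdm_dist_le_iso[OF mdm_isos_sccs_image[OF iso D(1)] _ \<open>0 \<le> \<epsilon>\<close>] by simp
  qed
  then show "\<forall>i < length L. mdm_dist (LY ! i) (L ! i) \<le> ereal \<epsilon>"
    by blast
qed

lemma finite_inj_on_separated:
  fixes k :: "'a \<Rightarrow> real"
  assumes "finite S" "inj_on k S"
  obtains \<gamma> where "\<gamma> > 0" "\<forall>a\<in>S. \<forall>b\<in>S. a \<noteq> b \<longrightarrow> \<gamma> \<le> \<bar>k a - k b\<bar>"
proof
  let ?G = "{\<bar>k a - k b\<bar> | a b. a \<in> S \<and> b \<in> S \<and> a \<noteq> b}"
  have "?G \<subseteq> (\<lambda>(a, b). \<bar>k a - k b\<bar>) ` (S \<times> S)"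
    by force
  moreover have "finite ((\<lambda>(a, b). \<bar>k a - k b\<bar>) ` (S \<times> S))"
    using assms(1) by simp
  ultimately have "finite ?G"
    by (rule finite_subset)
  moreover have "\<forall>x\<in>?G. 0 < x"
    using assms(2) by (auto simp: inj_on_def)
  ultimately show "0 < Min (insert 1 ?G)"
    by (subst Min_gr_iff) auto
  show "\<forall>a\<in>S. \<forall>b\<in>S. a \<noteq> b \<longrightarrow> Min (insert 1 ?G) \<le> \<bar>k a - k b\<bar>"
  proof (intro ballI impI Min_le)
    show "finite (insert 1 ?G)"
      using \<open>finite ?G\<close> by simp
  qed blast
qed

lemma ereal_tendsto_0I:
  fixes u :: "'a \<Rightarrow> ereal"
  assumes "\<And>x. 0 \<le> u x" and "\<And>\<epsilon>. \<epsilon> > 0 \<Longrightarrow> \<forall>\<^sub>F x in F. u x \<le> ereal \<epsilon>"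
  shows "(u \<longlongrightarrow> 0) F"
proof (rule order_tendstoI)
  show "\<forall>\<^sub>F x in F. a < u x" if "a < 0" for a
    using order_less_le_trans[OF that assms(1)] by simp
  show "\<forall>\<^sub>F x in F. u x < a" if "0 < a" for a
  proof -
    obtain \<epsilon> where "0 < ereal \<epsilon>" "ereal \<epsilon> < a"
      using ereal_dense2 \<open>0 < a\<close> by blast
    then have "\<forall>\<^sub>F x in F. u x \<le> ereal \<epsilon>"
      using assms(2) by simp
    then show ?thesis
      by (rule eventually_mono) (use \<open>ereal \<epsilon> < a\<close> order_le_less_trans in blast)
  qed
qed

lemma eventually_sorted_sccs_close:
  fixes X :: "('v, 'e) mdm" and Xs :: "nat \<Rightarrow> ('w, 'f) mdm" and \<epsilon> :: real
  assumes "is_mdm X" "\<And>n. is_mdm (Xs n)" "inj_on total_length (sccs X)"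
    and "(\<lambda>n. mdm_dist (Xs n) X) \<longlonglongrightarrow> 0"
    and "sorted_sccs X L" "\<And>n. sorted_sccs (Xs n) (Ls n)"
    and "\<epsilon> > 0"
  shows "\<forall>\<^sub>F n in sequentially. length (Ls n) = length L \<and>
           (\<forall>i < length L. mdm_dist (Ls n ! i) (L ! i) \<le> ereal \<epsilon>)"
proof -
  have "finite (sccs X)"
    using assms(5) by (metis List.finite_set sorted_sccs_def)
  then obtain \<gamma> where "\<gamma> > 0"
    and gap: "\<forall>A\<in>sccs X. \<forall>B\<in>sccs X. A \<noteq> B \<longrightarrow> \<gamma> \<le> \<bar>total_length A - total_length B\<bar>"
    using finite_inj_on_separated assms(3) by metis
  let ?M = "real (card (arcs X))"
  define \<delta> where "\<delta> = min \<epsilon> (\<gamma> / (2 * ?M + 2))"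
  have "\<delta> > 0" "\<delta> \<le> \<epsilon>"
    using \<open>\<epsilon> > 0\<close> \<open>\<gamma> > 0\<close> by (simp_all add: \<delta>_def)
  have "(2 * ?M + 2) * \<delta> \<le> \<gamma>"
    using pos_le_divide_eq[of "2 * ?M + 2" \<delta> \<gamma>] by (simp add: \<delta>_def add_pos_nonneg mult.commute)
  with \<open>\<delta> > 0\<close> have "2 * (?M * \<delta>) < \<gamma>"
    by (simp add: algebra_simps)
  with gap have gap_\<delta>: "\<forall>A\<in>sccs X. \<forall>B\<in>sccs X. A \<noteq> B \<longrightarrow>
      2 * (?M * \<delta>) < \<bar>total_length A - total_length B\<bar>"
    by (meson order_less_le_trans)
  have "\<forall>\<^sub>F n in sequentially. mdm_dist (Xs n) X < ereal \<delta>"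
    using order_tendstoD(2)[OF assms(4)] \<open>\<delta> > 0\<close> by simp
  then show ?thesis
  proof (rule eventually_mono)
    fix n
    assume "mdm_dist (Xs n) X < ereal \<delta>"
    from sorted_sccs_close[OF assms(1,2) this gap_\<delta> assms(5,6)] \<open>\<delta> \<le> \<epsilon>\<close>
    show "length (Ls n) = length L \<and> (\<forall>i < length L. mdm_dist (Ls n ! i) (L ! i) \<le> ereal \<epsilon>)"
      by (meson ereal_less_eq(3) order_trans)
  qed
qed

theorem proposition5p3:
  fixes X :: "('v, 'e) mdm" and Xs :: "nat \<Rightarrow> ('w, 'f) mdm"
    and L :: "('v, 'e) mdm list" and Ls :: "nat \<Rightarrow> ('w, 'f) mdm list"
  assumes "is_mdm X"
    and "\<And>n. is_mdm (Xs n)"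
    and "inj_on total_length (sccs X)"
    and "(\<lambda>n. mdm_dist (Xs n) X) \<longlonglongrightarrow> 0"
    and "sorted_sccs X L"
    and "\<And>n. sorted_sccs (Xs n) (Ls n)"
  shows "(\<forall>\<^sub>F n in sequentially. length (Ls n) = length L) \<and>
         (\<forall>i < length L. (\<lambda>n. mdm_dist (Ls n ! i) (L ! i)) \<longlonglongrightarrow> 0)"
proof -
  note close = eventually_sorted_sccs_close[OF assms]
  show ?thesis
  proof
    show "\<forall>\<^sub>F n in sequentially. length (Ls n) = length L"
      using close[of 1] by (auto elim: eventually_mono)
    show "\<forall>i < length L. (\<lambda>n. mdm_dist (Ls n ! i) (L ! i)) \<longlonglongrightarrow> 0"
    proof (intro allI impI ereal_tendsto_0I mdm_dist_nonneg)
      fix i and \<epsilon> :: real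
      assume "i < length L" "\<epsilon> > 0"
      with close[of \<epsilon>] show "\<forall>\<^sub>F n in sequentially. mdm_dist (Ls n ! i) (L ! i) \<le> ereal \<epsilon>"
        by (auto elim: eventually_mono)
    qed
  qed
qed

end
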